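(* There exist absolute constants $c>0$ and $n_0$ such that for every $n\ge n_0$, every $\epsilon\in(3\ln n/n,\,1/12)$, and every $\epsilon$-differentially private algorithm $M$ that takes as input a graph on a fixed vertex set $V$ with $|V|=n$ and outputs a cut $(S,V\setminus S)$ with $\emptyset\ne S\subsetneq V$, there exists a graph $G=(V,E)$ such that $\mathbb{E}[\mathrm{Cost}(G,M(G))]\ge \mathrm{OPT}(G)+c\ln n/\epsilon$.
   Context: A randomized algorithm $M$ on graphs with vertex set $V$ is $\epsilon$-differentially private if for any two edge sets $E,E'$ on $V$ whose symmetric difference has size one and any set $\mathcal{O}$ of outputs, $\Pr[M(V,E)\in\mathcal{O}]\le e^{\epsilon}\Pr[M(V,E')\in\mathcal{O}]$. For a graph $G$ and cut $(S,V\setminus S)$, $\mathrm{Cost}(G,(S,V\setminus S))$ is the number of edges of $G$ with exactly one endpoint in $S$, and $\mathrm{OPT}(G)$ is the minimum of this quantity over all $\emptyset\ne S\subsetneq V$. *)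

theory Defs
  imports "HOL-Probability.Probability"
begin

definition all_edges :: "nat set \<Rightarrow> nat set set" where
  "all_edges V = {e. e \<subseteq> V \<and> card e = 2}"

definition is_graph_on :: "nat set \<Rightarrow> nat set set \<Rightarrow> bool" where
  "is_graph_on V E \<longleftrightarrow> E \<subseteq> all_edges V"

definition cuts :: "nat set \<Rightarrow> nat set set" where
  "cuts V = {S. S \<noteq> {} \<and> S \<subset> V}"

definition cut_cost :: "nat set set \<Rightarrow> nat set \<Rightarrow> nat" where
  "cut_cost E S = card {e \<in> E. card (e \<inter> S) = 1}"

definition OPT :: "nat set \<Rightarrow> nat set set \<Rightarrow> nat" where
  "OPT V E = Min (cut_cost E ` cuts V)"

definition dp_cut_algorithm :: "nat set \<Rightarrow> real \<Rightarrow> (nat set set \<Rightarrow> nat set pmf) \<Rightarrow> bool" where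
  "dp_cut_algorithm V eps M \<longleftrightarrow>
     (\<forall>E. is_graph_on V E \<longrightarrow> set_pmf (M E) \<subseteq> cuts V) \<and>
     (\<forall>E E' Out. is_graph_on V E \<longrightarrow> is_graph_on V E' \<longrightarrow>
        card ((E - E') \<union> (E' - E)) = 1 \<longrightarrow>
        measure_pmf.prob (M E) Out \<le> exp eps * measure_pmf.prob (M E') Out)"

end

theory Submission
  imports Defs
begin

text \<open>Run the algorithm on the complete graph: some vertex v is isolated by the output cut
  with probability at most 1/n. Deleting k \<approx> ln n / (2\<epsilon>) edges at v lowers the optimum to at
  most n - 1 - k, while every cut that does not isolate v still costs at least n - 2. By group
  privacy the deletion raises the probability of isolating v by a factor at most
  exp (\<epsilon> k) \<le> \<surd>n, so with probability at least 1/2 the algorithm pays k - 1 \<approx> ln n / (2\<epsilon>) more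
  than the optimum.\<close>

definition isolating_cuts :: "nat set \<Rightarrow> nat \<Rightarrow> nat set set" where
  "isolating_cuts V v = {{v}, V - {v}}"

definition star_edges :: "nat \<Rightarrow> nat set \<Rightarrow> nat set set" where
  "star_edges v U = (\<lambda>u. {v, u}) ` U"

lemma measure_pmf_pigeonhole:
  assumes "finite I" "I \<noteq> {}" "disjoint_family_on A I"
  shows "\<exists>i\<in>I. measure_pmf.prob p (A i) \<le> 1 / card I"
proof (rule ccontr)
  assume "\<not> ?thesis"
  then have "(\<Sum>i\<in>I. 1 / card I) < (\<Sum>i\<in>I. measure_pmf.prob p (A i))"
    using assms by (intro sum_strict_mono) auto
  also have "\<dots> = measure_pmf.prob p (\<Union>i\<in>I. A i)"
    using assms by (intro measure_pmf.finite_measure_finite_Union[symmetric]) auto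
  finally show False
    using assms measure_pmf.prob_le_1[of p "\<Union>i\<in>I. A i"] by simp
qed

lemma measure_pmf_expectation_ge_two_levels:
  fixes f :: "'a \<Rightarrow> real"
  assumes "finite (set_pmf p)" "0 \<le> d"
    and "\<And>x. x \<in> set_pmf p \<Longrightarrow> a \<le> f x"
    and "\<And>x. x \<in> set_pmf p \<Longrightarrow> x \<notin> A \<Longrightarrow> a + d \<le> f x"
  shows "a + d * (1 - measure_pmf.prob p A) \<le> measure_pmf.expectation p f"
proof -
  have "a + d * (1 - measure_pmf.prob p A) =
        measure_pmf.expectation p (\<lambda>x. a + d * indicator (- A) x)"
    using assms(1) measure_pmf.prob_compl[of A p]
    by (simp add: integrable_measure_pmf_finite Compl_eq_Diff_UNIV)
  also have "\<dots> \<le> measure_pmf.expectation p f"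
    using assms by (intro integral_mono_AE)
      (auto simp: AE_measure_pmf_iff integrable_measure_pmf_finite indicator_def)
  finally show ?thesis .
qed

lemma dp_cut_algorithm_group_privacy:
  assumes dp: "dp_cut_algorithm V eps M" and "is_graph_on V E"
    and "finite R" "R \<subseteq> E"
  shows "measure_pmf.prob (M (E - R)) A \<le> exp (eps * card R) * measure_pmf.prob (M E) A"
  using \<open>finite R\<close> \<open>R \<subseteq> E\<close>
proof (induction R rule: finite_induct)
  case empty
  show ?case by simp
next
  case (insert x F)
  have graphs: "is_graph_on V (E - insert x F)" "is_graph_on V (E - F)"
    using \<open>is_graph_on V E\<close> by (auto simp: is_graph_on_def)
  have "((E - insert x F) - (E - F)) \<union> ((E - F) - (E - insert x F)) = {x}"
    using insert by auto
  then have "measure_pmf.prob (M (E - insert x F)) A \<le> exp eps * measure_pmf.prob (M (E - F)) A"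
    using dp graphs unfolding dp_cut_algorithm_def by (metis is_singleton_altdef is_singletonI)
  also have "\<dots> \<le> exp eps * (exp (eps * card F) * measure_pmf.prob (M E) A)"
    using insert by (intro mult_left_mono) auto
  also have "\<dots> = exp (eps * card (insert x F)) * measure_pmf.prob (M E) A"
    using insert by (simp add: exp_add[symmetric] algebra_simps)
  finally show ?case .
qed

lemma finite_all_edges: "finite V \<Longrightarrow> finite (all_edges V)"
  unfolding all_edges_def by (rule finite_subset[of _ "Pow V"]) auto

lemma finite_cuts: "finite V \<Longrightarrow> finite (cuts V)"
  unfolding cuts_def by (rule finite_subset[of _ "Pow V"]) auto

lemma OPT_le_cut_cost: "finite V \<Longrightarrow> S \<in> cuts V \<Longrightarrow> OPT V E \<le> cut_cost E S"
  unfolding OPT_def by (intro Min_le) (auto simp: finite_cuts)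

lemma cut_cost_mono: "E \<subseteq> E' \<Longrightarrow> finite E' \<Longrightarrow> cut_cost E S \<le> cut_cost E' S"
  unfolding cut_cost_def by (intro card_mono) auto

lemma card_doubletons:
  assumes "finite T" "finite W" "T \<inter> W = {}"
  shows "card ((\<lambda>(t, w). {t, w}) ` (T \<times> W)) = card T * card W"
proof -
  have "inj_on (\<lambda>(t, w). {t, w}) (T \<times> W)"
    using assms(3) by (auto simp: inj_on_def doubleton_eq_iff)
  then show ?thesis
    by (simp add: card_image card_cartesian_product)
qed

lemma cut_cost_all_edges_ge:
  assumes "finite W"
  shows "card (W \<inter> S) * card (W - S) \<le> cut_cost (all_edges W) S"
proof -
  have "(\<lambda>(t, w). {t, w}) ` ((W \<inter> S) \<times> (W - S)) \<subseteq> {e \<in> all_edges W. card (e \<inter> S) = 1}"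
  proof safe
    fix t w assume "t \<in> W" "t \<in> S" "w \<in> W" "w \<notin> S"
    then have "t \<noteq> w" "{t, w} \<inter> S = {t}" by auto
    then show "{t, w} \<in> all_edges W" "card ({t, w} \<inter> S) = 1"
      using \<open>t \<in> W\<close> \<open>w \<in> W\<close> by (auto simp: all_edges_def)
  qed
  then have "card ((\<lambda>(t, w). {t, w}) ` ((W \<inter> S) \<times> (W - S))) \<le> cut_cost (all_edges W) S"
    unfolding cut_cost_def using assms by (intro card_mono) (auto simp: finite_all_edges)
  then show ?thesis
    using assms by (subst (asm) card_doubletons) auto
qed

lemma add_le_mult_plus_one: "0 < a \<Longrightarrow> 0 < b \<Longrightarrow> a + b \<le> a * b + (1::nat)"
  by (cases a; cases b) auto

text \<open>A cut not isolating v splits the n - 1 other vertices into two nonempty parts, all of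
  whose connecting edges survive.\<close>

lemma cut_cost_ge_if_not_isolating:
  assumes "finite V" "v \<in> V"
    and "all_edges (V - {v}) \<subseteq> E" "finite E"
    and "S \<in> cuts V" "S \<notin> isolating_cuts V v"
  shows "card V - 2 \<le> cut_cost E S"
proof -
  let ?W = "V - {v}"
  have S: "S \<noteq> {}" "S \<subset> V" "S \<noteq> {v}" "S \<noteq> V - {v}"
    using assms(5,6) by (auto simp: cuts_def isolating_cuts_def)
  have "?W \<inter> S \<noteq> {}"
    using S(1-3) by blast
  moreover have "?W - S \<noteq> {}"
  proof
    assume "?W - S = {}"
    then have "S = V \<or> S = V - {v}"
      using S(2) by blast
    then show False
      using S(2,4) by blast
  qed
  ultimately have "card (?W \<inter> S) + card (?W - S) \<le> card (?W \<inter> S) * card (?W - S) + 1"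
    using assms(1) by (intro add_le_mult_plus_one) auto
  moreover have "card (?W \<inter> S) + card (?W - S) = card V - 1"
    using assms(1,2) card_Int_Diff[of ?W S] by simp
  moreover have "card (?W \<inter> S) * card (?W - S) \<le> cut_cost E S"
    using cut_cost_all_edges_ge[of ?W S] cut_cost_mono[OF assms(3,4), of S] assms(1) by simp
  ultimately show ?thesis
    by linarith
qed

lemma cut_cost_singleton_remove_star_le:
  assumes "finite V" "E \<subseteq> all_edges V"
  shows "cut_cost (E - star_edges v U) {v} \<le> card (V - {v} - U)"
proof -
  have "{e \<in> E - star_edges v U. card (e \<inter> {v}) = 1} \<subseteq> star_edges v (V - {v} - U)"
  proof safe
    fix e assume e: "e \<in> E" "e \<notin> star_edges v U" "card (e \<inter> {v}) = 1"
    then have "v \<in> e"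
      by (metis Int_empty_right Int_insert_right card.empty zero_neq_one)
    moreover obtain a b where "e = {a, b}" "a \<noteq> b" "a \<in> V" "b \<in> V"
      using e(1) assms(2) by (auto simp: all_edges_def card_2_iff)
    ultimately obtain u where "e = {v, u}" "u \<noteq> v" "u \<in> V"
      by auto
    then show "e \<in> star_edges v (V - {v} - U)"
      using e(2) by (auto simp: star_edges_def)
  qed
  then have "cut_cost (E - star_edges v U) {v} \<le> card (star_edges v (V - {v} - U))"
    unfolding cut_cost_def using assms by (intro card_mono) (auto simp: star_edges_def)
  also have "\<dots> \<le> card (V - {v} - U)"
    unfolding star_edges_def by (rule card_image_le) (use assms in auto)
  finally show ?thesis .
qed

lemma disjoint_family_isolating_cuts:
  assumes "finite V" "3 \<le> card V"
  shows "disjoint_family_on (isolating_cuts V) V"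
proof -
  have "{v} \<noteq> V - {w}" if "w \<in> V" for v w
  proof
    assume "{v} = V - {w}"
    then have "V = {v, w}"
      using that by auto
    then have "card V \<le> 2"
      by (simp add: card_insert_if)
    then show False using assms(2) by simp
  qed
  then show ?thesis
    unfolding disjoint_family_on_def isolating_cuts_def by fastforce
qed


lemma star_edges_subset_all_edges:
  "v \<in> V \<Longrightarrow> U \<subseteq> V - {v} \<Longrightarrow> star_edges v U \<subseteq> all_edges V"
  by (auto simp: star_edges_def all_edges_def card_insert_if)

lemma card_star_edges: "v \<notin> U \<Longrightarrow> card (star_edges v U) = card U"
  unfolding star_edges_def by (rule card_image) (auto simp: inj_on_def doubleton_eq_iff)

lemma OPT_remove_star_le:
  assumes "finite V" "v \<in> V" "2 \<le> card V" "U \<subseteq> V - {v}"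
  shows "OPT V (all_edges V - star_edges v U) + card U + 1 \<le> card V"
proof -
  have "{v} \<in> cuts V"
    using assms(2,3) by (auto simp: cuts_def)
  then have "OPT V (all_edges V - star_edges v U) \<le> cut_cost (all_edges V - star_edges v U) {v}"
    using OPT_le_cut_cost[OF assms(1)] by blast
  also have "\<dots> \<le> card (V - {v} - U)"
    using assms(1) by (intro cut_cost_singleton_remove_star_le) auto
  also have "\<dots> = card V - 1 - card U"
    using assms card_Diff_subset[OF finite_subset[OF assms(4)] assms(4)] by simp
  finally show ?thesis
    using assms card_mono[OF _ assms(4)] by simp
qed

lemma expectation_cut_cost_remove_star_ge:
  assumes V: "finite V" "v \<in> V" "2 \<le> card V" and U: "U \<subseteq> V - {v}" "U \<noteq> {}"
    and p: "set_pmf p \<subseteq> cuts V"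
  defines "E \<equiv> all_edges V - star_edges v U"
  shows "real (OPT V E) + (real (card U) - 1) * (1 - measure_pmf.prob p (isolating_cuts V v))
    \<le> measure_pmf.expectation p (\<lambda>S. real (cut_cost E S))"
proof (rule measure_pmf_expectation_ge_two_levels)
  show "finite (set_pmf p)"
    using finite_subset[OF p finite_cuts[OF V(1)]] .
  show "0 \<le> real (card U) - 1"
  proof -
    have "finite U"
      using finite_subset[OF U(1)] V(1) by simp
    then show ?thesis
      using U(2) by (simp add: Suc_le_eq card_gt_0_iff)
  qed
  show "real (OPT V E) \<le> real (cut_cost E S)" if "S \<in> set_pmf p" for S
    using OPT_le_cut_cost[OF V(1)] that p by auto
  show "real (OPT V E) + (real (card U) - 1) \<le> real (cut_cost E S)"
    if "S \<in> set_pmf p" "S \<notin> isolating_cuts V v" for S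
  proof -
    have "all_edges (V - {v}) \<subseteq> E" "finite E"
      using V(1) by (auto simp: E_def all_edges_def star_edges_def finite_all_edges)
    then have "card V - 2 \<le> cut_cost E S"
      using cut_cost_ge_if_not_isolating[OF V(1,2)] that p by blast
    moreover have "OPT V E + card U + 1 \<le> card V"
      unfolding E_def by (rule OPT_remove_star_le[OF V U(1)])
    ultimately show ?thesis
      using V(3) by linarith
  qed
qed

lemma edge_budget_bounds:
  fixes n :: nat and eps :: real
  assumes n: "4 \<le> n" and eps: "3 * ln n / n < eps" "eps < 1/12"
  defines "k \<equiv> nat \<lfloor>ln n / (2 * eps)\<rfloor>"
  shows "0 < eps" "k \<le> n - 2" "exp (eps * k) \<le> n / 2" "ln n / (4 * eps) \<le> real k - 1"
proof -
  have "ln (4::real) \<le> ln n"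
    using n by (intro ln_mono) auto
  then have ln_n: "2 * ln 2 \<le> ln n"
    using ln_mult[of 2 2] by simp
  have "exp 1 \<le> real n"
    using exp_le n by linarith
  then have "1 \<le> ln n"
    using n by (simp add: ln_ge_iff)
  then have "0 < 3 * ln n / n"
    using n by simp
  then show eps_pos: "0 < eps"
    using eps(1) by linarith
  define x where "x = ln n / (2 * eps)"
  have "x < n / 6"
    using eps(1) n eps_pos by (simp add: x_def field_simps)
  have "6 * ln n < x"
    using eps(2) eps_pos \<open>1 \<le> ln n\<close> by (simp add: x_def field_simps)
  then have k: "real k \<le> x" "x - 1 < real k"
    using \<open>1 \<le> ln n\<close> unfolding k_def x_def[symmetric] by linarith+
  have "real k \<le> real (n - 2)"
    using k(1) \<open>x < n / 6\<close> n by (simp add: of_nat_diff)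
  then show "k \<le> n - 2"
    by simp
  have "ln n / (4 * eps) = x / 2"
    by (simp add: x_def)
  then show "ln n / (4 * eps) \<le> real k - 1"
    using k(2) \<open>6 * ln n < x\<close> \<open>1 \<le> ln n\<close> by linarith
  have "eps * k \<le> ln n / 2"
    using k(1) eps_pos by (simp add: x_def field_simps)
  also have "\<dots> \<le> ln (n / 2)"
    using ln_n n by (simp add: ln_div)
  finally have "exp (eps * k) \<le> exp (ln (n / 2))"
    by simp
  then show "exp (eps * k) \<le> n / 2"
    using n by simp
qed

lemma dp_cut_lower_bound:
  fixes V :: "nat set" and M :: "nat set set \<Rightarrow> nat set pmf"
  assumes V: "finite V" "card V = n" and n: "4 \<le> n"
    and eps: "3 * ln n / n < eps" "eps < 1/12"
    and dp: "dp_cut_algorithm V eps M"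
  shows "\<exists>E. is_graph_on V E \<and>
     real (OPT V E) + ln n / (8 * eps) \<le> measure_pmf.expectation (M E) (\<lambda>S. real (cut_cost E S))"
proof -
  define k where "k = nat \<lfloor>ln n / (2 * eps)\<rfloor>"
  note budget = edge_budget_bounds[OF n eps, folded k_def]
  have "0 < ln n / (4 * eps)"
    using n budget(1) by (simp add: ln_gt_zero)
  then have k_gt_1: "0 < real k - 1"
    using budget(4) by linarith
  let ?complete = "all_edges V"
  have "\<exists>v\<in>V. measure_pmf.prob (M ?complete) (isolating_cuts V v) \<le> 1 / card V"
    by (rule measure_pmf_pigeonhole[OF V(1) _ disjoint_family_isolating_cuts[OF V(1)]]) (use V n in auto)
  then obtain v where v: "v \<in> V" "measure_pmf.prob (M ?complete) (isolating_cuts V v) \<le> 1 / n"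
    using V(2) by blast
  have "k \<le> card (V - {v})"
    using budget(2) V v(1) by simp
  then obtain U where U: "U \<subseteq> V - {v}" "card U = k"
    by (meson obtain_subset_with_card_n)
  define E where "E = ?complete - star_edges v U"
  have graph: "is_graph_on V E"
    by (simp add: E_def is_graph_on_def)
  have "finite (star_edges v U)" "card (star_edges v U) = k"
    using finite_subset[OF U(1)] V(1) card_star_edges[of v U] U by (auto simp: star_edges_def)
  then have "measure_pmf.prob (M E) (isolating_cuts V v)
      \<le> exp (eps * k) * measure_pmf.prob (M ?complete) (isolating_cuts V v)"
    using dp_cut_algorithm_group_privacy[OF dp _ _ star_edges_subset_all_edges[OF v(1) U(1)]]
    by (simp add: E_def is_graph_on_def)
  also have "\<dots> \<le> (n / 2) * (1 / n)"
    using budget(3) v(2) by (intro mult_mono) auto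
  finally have isolating_rare: "measure_pmf.prob (M E) (isolating_cuts V v) \<le> 1 / 2"
    using n by simp
  have "U \<noteq> {}"
    using U(2) k_gt_1 by auto
  moreover have "set_pmf (M E) \<subseteq> cuts V"
    using dp graph by (auto simp: dp_cut_algorithm_def)
  ultimately have "real (OPT V E) + (real k - 1) * (1 - measure_pmf.prob (M E) (isolating_cuts V v))
      \<le> measure_pmf.expectation (M E) (\<lambda>S. real (cut_cost E S))"
    using expectation_cut_cost_remove_star_ge[OF V(1) v(1) _ U(1)] U(2) V(2) n
    unfolding E_def by simp
  moreover have "ln n / (8 * eps) \<le> (real k - 1) * (1 - measure_pmf.prob (M E) (isolating_cuts V v))"
  proof -
    have "ln n / (8 * eps) \<le> (real k - 1) * (1 / 2)"
      using budget(4) by simp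
    also have "\<dots> \<le> (real k - 1) * (1 - measure_pmf.prob (M E) (isolating_cuts V v))"
      using k_gt_1 isolating_rare by (intro mult_left_mono) auto
    finally show ?thesis .
  qed
  ultimately show ?thesis
    using graph by (intro exI[of _ E]) auto
qed

theorem mainTheorem2:
  shows "\<exists>c::real. c > 0 \<and> (\<exists>n0::nat. \<forall>n \<ge> n0. \<forall>eps::real. \<forall>V::nat set.
           \<forall>M::nat set set \<Rightarrow> nat set pmf.
           finite V \<longrightarrow> card V = n \<longrightarrow>
           3 * ln (real n) / real n < eps \<longrightarrow> eps < 1/12 \<longrightarrow>
           dp_cut_algorithm V eps M \<longrightarrow>
           (\<exists>E. is_graph_on V E \<and>
              measure_pmf.expectation (M E) (\<lambda>S. real (cut_cost E S))
                \<ge> real (OPT V E) + c * ln (real n) / eps))"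
proof (intro exI[of _ "1/8"] conjI exI[of _ 4] allI impI)
  fix n :: nat and eps :: real and V :: "nat set" and M :: "nat set set \<Rightarrow> nat set pmf"
  assume "4 \<le> n" "finite V" "card V = n" "3 * ln n / n < eps" "eps < 1/12"
    "dp_cut_algorithm V eps M"
  then show "\<exists>E. is_graph_on V E \<and>
      measure_pmf.expectation (M E) (\<lambda>S. real (cut_cost E S)) \<ge> real (OPT V E) + 1/8 * ln n / eps"
    using dp_cut_lower_bound by fastforce
qed simp

end
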